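(* Let $T>0$, let $H(t,p)\in C^1([0,T]\times\mathbb{R}^n)$ and let $\sigma\in C^1(\mathbb{R}^n)$ be convex and Lipschitz. Suppose that for some $t_1\in(0,T)$ the function $\omega(x)=u(t_1,x)=\big(\sigma^*+\int_0^{t_1}H(\tau,\cdot)d\tau\big)^*(x)$ is of class $C^1(\mathbb{R}^n)$. Then: (1) every characteristic curve $\mathcal C:\ x=x(t,z)=z+\int_{t_1}^tH_p(\tau,D\omega(z))\,d\tau$, $t\in[t_1,T]$, of problem $(H,\omega)$ can be extended backward to a characteristic curve of problem $(H,\sigma)$ on $[0,T]$ starting at $(0,y)$, where $y=z-\int_0^{t_1}H_p(\tau,D\omega(z))\,d\tau$; that is, the curve $x(t)=z+\int_{t_1}^tH_p(\tau,D\omega(z))d\tau$, $t\in[0,T]$, is the characteristic curve of $(H,\sigma)$ emanating from $y$. (2) Conversely, if $\mathcal C':\ x=x(t,y)=y+\int_0^tH_p(\tau,D\sigma(y))\,d\tau$, $t\in[0,T]$, is a characteristic curve of problem $(H,\sigma)$ which is of type (I) at the point $(t_1,x_1)$, $x_1=x(t_1,y)$, then the restriction of $\mathcal C'$ to $[t_1,T]$ is a characteristic curve of problem $(H,\omega)$ on $[t_1,T]\times\mathbb{R}^n$, namely it equals $x=x_1+\int_{t_1}^tH_p(\tau,D\omega(x_1))d\tau$, $t\in[t_1,T]$.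
   Context: $f^*(y)=\sup_q\{\langle y,q\rangle-f(q)\}$ denotes the Fenchel conjugate; $D\sigma$, $D\omega$ denote gradients and $H_p$ the gradient of $H$ in $p$. Problem $(H,\sigma)$ is the Cauchy problem $u_t+H(t,D_xu)=0$ on $(0,T)\times\mathbb{R}^n$, $u(0,x)=\sigma(x)$; its characteristic curve emanating from $y\in\mathbb{R}^n$ is $x(t,y)=y+\int_0^tH_p(\tau,D\sigma(y))d\tau$, $t\in[0,T]$ (the $x$-component of the solution of $\dot x=H_p$, $\dot v=\langle H_p,p\rangle-H$, $\dot p=0$, $x(0)=y$, $v(0)=\sigma(y)$, $p(0)=D\sigma(y)$). Problem $(H,\omega)$ is the Cauchy problem $u_t+H(t,D_xu)=0$ on $(t_1,T)\times\mathbb{R}^n$, $u(t_1,x)=\omega(x)$; its characteristic curve emanating from $z$ is $x(t,z)=z+\int_{t_1}^tH_p(\tau,D\omega(z))d\tau$, $t\in[t_1,T]$. For $(t,x)$, $\ell(t,x)$ is the set of maximizers $p\in\mathbb{R}^n$ of $q\mapsto\langle x,q\rangle-\sigma^*(q)-\int_0^tH(\tau,q)d\tau$. A characteristic curve of $(H,\sigma)$ emanating from $y$ and passing through $(t_0,x_0)$ is of type (I) at $(t_0,x_0)$ if $D\sigma(y)\in\ell(t_0,x_0)$. *)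

theory Defs
  imports "HOL-Analysis.Analysis" "HOL-Library.Extended_Real"
begin

definition fconj :: "('a::euclidean_space \<Rightarrow> ereal) \<Rightarrow> 'a \<Rightarrow> ereal" where
  "fconj f y = (SUP q. ereal (inner y q) - f q)"

definition ointegral :: "real \<Rightarrow> real \<Rightarrow> (real \<Rightarrow> 'b::euclidean_space) \<Rightarrow> 'b" where
  "ointegral a b f = (if a \<le> b then integral {a..b} f else - integral {b..a} f)"

definition ell :: "('a::euclidean_space \<Rightarrow> real) \<Rightarrow> (real \<Rightarrow> 'a \<Rightarrow> real) \<Rightarrow> real \<Rightarrow> 'a \<Rightarrow> 'a set" where
  "ell \<sigma> H t x = {p. \<forall>q.
      ereal (inner x q) - fconj (\<lambda>z. ereal (\<sigma> z)) q - ereal (integral {0..t} (\<lambda>\<tau>. H \<tau> q))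
      \<le> ereal (inner x p) - fconj (\<lambda>z. ereal (\<sigma> z)) p - ereal (integral {0..t} (\<lambda>\<tau>. H \<tau> p))}"

end

theory Submission
  imports Defs
begin

text \<open>Write \<open>I(q)\<close> for the integral of \<open>H(\<tau>, q)\<close> over \<open>[0, t\<^sub>1]\<close>, so that
  \<open>\<omega> = (\<sigma>\<^sup>* + I)\<^sup>*\<close>. Since \<open>\<sigma>\<close> is Lipschitz, \<open>\<sigma>\<^sup>*\<close> is finite only on a ball, so the
  supremum defining \<open>\<omega>(z)\<close> is attained at some \<open>p\<close>; such a \<open>p\<close> is a subgradient of \<open>\<omega>\<close>
  at \<open>z\<close>, hence \<open>p = D\<omega>(z)\<close>. The first-order condition at the maximiser says
  \<open>y = z - DI(p) \<in> \<partial>\<sigma>\<^sup>*(p)\<close>, i.e. \<open>p\<close> is a subgradient of \<open>\<sigma>\<close> at \<open>y\<close>, so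
  \<open>D\<sigma>(y) = D\<omega>(z)\<close>: both characteristics carry the same momentum and therefore coincide.
  Conversely, type (I) says that \<open>D\<sigma>(y)\<close> attains the supremum defining \<open>\<omega>(x\<^sub>1)\<close>, so it
  is a subgradient, hence the gradient, of \<open>\<omega>\<close> at \<open>x\<^sub>1\<close>.\<close>

lemma DERIV_le_of_le_linear_at_right:
  fixes f :: "real \<Rightarrow> real"
  assumes deriv: "(f has_real_derivative a) (at 0)" and f0: "f 0 = 0"
    and le: "\<And>s. 0 < s \<Longrightarrow> s \<le> 1 \<Longrightarrow> f s \<le> s * c"
  shows "a \<le> c"
proof -
  have "((\<lambda>s. (f s - f 0) / (s - 0)) \<longlongrightarrow> a) (at 0)"
    using deriv by (simp add: has_field_derivative_iff)
  hence slope: "((\<lambda>s. f s / s) \<longlongrightarrow> a) (at_right 0)"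
    using f0 by (auto intro: tendsto_mono[OF at_le])
  have "eventually (\<lambda>s. 0 < s \<and> s < 1) (at_right (0::real))"
    by (simp add: eventually_at_right_field) (auto intro: exI[of _ 1])
  hence "eventually (\<lambda>s. f s / s \<le> c) (at_right (0::real))"
    by eventually_elim (use le in \<open>auto simp: divide_le_eq mult.commute\<close>)
  thus ?thesis using tendsto_upperbound[OF slope] by simp
qed

lemma has_real_derivative_along_line:
  fixes f :: "'a::real_inner \<Rightarrow> real"
  assumes "(f has_derivative inner d) (at (x + s *\<^sub>R v))"
  shows "((\<lambda>s. f (x + s *\<^sub>R v)) has_real_derivative inner d v) (at s)"
proof -
  have "((\<lambda>s. x + s *\<^sub>R v) has_derivative (\<lambda>s. s *\<^sub>R v)) (at s)"
    by (auto intro!: derivative_eq_intros)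
  from has_derivative_compose[OF this assms]
  show ?thesis unfolding has_field_derivative_def
    by (rule has_derivative_eq_rhs) (auto simp: fun_eq_iff)
qed

lemma subgradient_eq_gradient:
  fixes f :: "'a::real_inner \<Rightarrow> real"
  assumes deriv: "(f has_derivative inner d) (at x)"
    and subgradient: "\<And>w. f x + inner p (w - x) \<le> f w"
  shows "p = d"
proof -
  define v where "v = p - d"
  have "((\<lambda>s. f (x + s *\<^sub>R v)) has_real_derivative inner d v) (at 0)"
    by (rule has_real_derivative_along_line) (simp add: deriv)
  from DERIV_minus[OF DERIV_diff[OF this DERIV_const[of "f x"]]]
  have slope: "((\<lambda>s. - (f (x + s *\<^sub>R v) - f x)) has_real_derivative - inner d v) (at 0)"
    by simp
  have le: "- (f (x + s *\<^sub>R v) - f x) \<le> s * (- inner p v)" for s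
    using subgradient[of "x + s *\<^sub>R v"] by simp
  have "- inner d v \<le> - inner p v"
    by (rule DERIV_le_of_le_linear_at_right[OF slope]) (simp, rule le)
  hence "inner v v \<le> 0" by (simp add: v_def inner_diff_left)
  hence "v = 0" by (metis inner_gt_zero_iff not_le)
  thus ?thesis by (simp add: v_def)
qed

lemma convex_on_above_tangent_plane:
  fixes f :: "'a::real_inner \<Rightarrow> real"
  assumes convex: "convex_on UNIV f" and deriv: "(f has_derivative inner d) (at y)"
  shows "f y + inner d (w - y) \<le> f w"
proof -
  have "((\<lambda>s. f (y + s *\<^sub>R (w - y))) has_real_derivative inner d (w - y)) (at 0)"
    by (rule has_real_derivative_along_line) (simp add: deriv)
  from DERIV_diff[OF this DERIV_const[of "f y"]]
  have slope: "((\<lambda>s. f (y + s *\<^sub>R (w - y)) - f y) has_real_derivative inner d (w - y)) (at 0)"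
    by simp
  have le: "f (y + s *\<^sub>R (w - y)) - f y \<le> s * (f w - f y)" if "0 < s" "s \<le> 1" for s
  proof -
    have "f ((1 - s) *\<^sub>R y + s *\<^sub>R w) \<le> (1 - s) * f y + s * f w"
      using convex that by (intro convex_onD) auto
    moreover have "(1 - s) *\<^sub>R y + s *\<^sub>R w = y + s *\<^sub>R (w - y)" by (simp add: algebra_simps)
    ultimately show ?thesis by (simp add: algebra_simps)
  qed
  have "inner d (w - y) \<le> f w - f y"
    by (rule DERIV_le_of_le_linear_at_right[OF slope]) (simp, rule le)
  thus ?thesis by simp
qed

lemma fconj_ge: "ereal (inner x q) - g q \<le> fconj g x"
  unfolding fconj_def by (rule SUP_upper) simp

lemma fconj_le_iff: "fconj g x \<le> c \<longleftrightarrow> (\<forall>q. ereal (inner x q) - g q \<le> c)"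
  unfolding fconj_def by (simp add: SUP_le_iff)

lemma fconj_real_le_iff:
  "fconj (\<lambda>x. ereal (f x)) q \<le> ereal c \<longleftrightarrow> (\<forall>w. inner w q - f w \<le> c)"
  by (simp add: fconj_le_iff inner_commute)

lemma fconj_real_ge: "ereal (inner w q - f w) \<le> fconj (\<lambda>x. ereal (f x)) q"
  using fconj_ge[of q w "\<lambda>x. ereal (f x)"] by (simp add: inner_commute)

lemma fconj_real_neq_minf: "fconj (\<lambda>x. ereal (f x)) q \<noteq> -\<infinity>"
  using fconj_real_ge[of 0 q f] by (metis MInfty_neq_ereal(1) ereal_infty_less_eq(2))

lemma fconj_real_convex:
  assumes "fconj (\<lambda>x. ereal (f x)) p \<le> ereal a" "fconj (\<lambda>x. ereal (f x)) r \<le> ereal b"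
    and "0 \<le> s" "s \<le> 1"
  shows "fconj (\<lambda>x. ereal (f x)) ((1 - s) *\<^sub>R p + s *\<^sub>R r) \<le> ereal ((1 - s) * a + s * b)"
  unfolding fconj_real_le_iff
proof
  fix w
  have "inner w p - f w \<le> a" "inner w r - f w \<le> b"
    using assms(1,2) unfolding fconj_real_le_iff by blast+
  hence "(1 - s) * (inner w p - f w) + s * (inner w r - f w) \<le> (1 - s) * a + s * b"
    using assms(3,4) by (intro add_mono mult_left_mono) auto
  thus "inner w ((1 - s) *\<^sub>R p + s *\<^sub>R r) - f w \<le> (1 - s) * a + s * b"
    by (simp add: inner_add_right algebra_simps)
qed

lemma fconj_gradient_eq:
  assumes "convex_on UNIV f" "(f has_derivative inner d) (at y)"
  shows "fconj (\<lambda>x. ereal (f x)) d = ereal (inner y d - f y)"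
proof (rule antisym)
  show "fconj (\<lambda>x. ereal (f x)) d \<le> ereal (inner y d - f y)"
    unfolding fconj_real_le_iff
  proof
    fix w
    have "f y + inner d (w - y) \<le> f w" by (rule convex_on_above_tangent_plane[OF assms])
    thus "inner w d - f w \<le> inner y d - f y"
      by (simp add: inner_diff_right inner_commute)
  qed
qed (rule fconj_real_ge)

lemma fconj_lipschitz_bounded:
  fixes f :: "'a::euclidean_space \<Rightarrow> real"
  assumes lip: "L-lipschitz_on UNIV f" and le: "fconj (\<lambda>x. ereal (f x)) q \<le> ereal c"
  shows "norm q \<le> L"
proof (rule ccontr)
  assume "\<not> norm q \<le> L"
  define a where "a = norm q * (norm q - L)"
  have a: "a > 0"
    using \<open>\<not> norm q \<le> L\<close> lipschitz_on_nonneg[OF lip] unfolding a_def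
    by (intro mult_pos_pos) auto
  define s where "s = (\<bar>c + f 0\<bar> + 1) / a"
  have s: "s > 0" using a by (simp add: s_def)
  have "inner (s *\<^sub>R q) q - f (s *\<^sub>R q) \<le> c"
    using le unfolding fconj_real_le_iff by blast
  moreover have "f (s *\<^sub>R q) \<le> f 0 + L * (s * norm q)"
    using lipschitz_onD[OF lip, of "s *\<^sub>R q" 0] s by (simp add: dist_norm dist_real_def)
  moreover have "inner (s *\<^sub>R q) q - L * (s * norm q) = s * a"
    by (simp add: a_def dot_square_norm power2_eq_square algebra_simps)
  moreover have "s * a = \<bar>c + f 0\<bar> + 1" using a by (simp add: s_def)
  ultimately show False by linarith
qed

lemma fconj_plus_attained:
  fixes f I :: "'a::euclidean_space \<Rightarrow> real"
  assumes lip: "L-lipschitz_on UNIV f" and I: "continuous_on UNIV I"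
    and w: "fconj (\<lambda>q. fconj (\<lambda>x. ereal (f x)) q + ereal (I q)) z = ereal w"
  shows "\<exists>p. fconj (\<lambda>x. ereal (f x)) p = ereal (inner z p - I p - w)"
proof -
  define S where "S = fconj (\<lambda>x. ereal (f x))"
  define eps :: "nat \<Rightarrow> real" where "eps k = inverse (real (Suc k))" for k
  have "\<exists>q. ereal (w - eps k) < ereal (inner z q) - (S q + ereal (I q))" for k
  proof -
    have "ereal (w - eps k) < fconj (\<lambda>q. S q + ereal (I q)) z"
      using w by (simp add: S_def eps_def)
    thus ?thesis by (simp add: fconj_def less_SUP_iff)
  qed
  then obtain Q where Q: "\<And>k. ereal (w - eps k) < ereal (inner z (Q k)) - (S (Q k) + ereal (I (Q k)))"
    by metis
  define c where "c k = real_of_ereal (S (Q k))" for k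
  have S_Q: "S (Q k) = ereal (c k)" for k
  proof -
    have "S (Q k) \<noteq> \<infinity>" using Q[of k] by (cases "S (Q k)") simp_all
    thus ?thesis using fconj_real_neq_minf[of f "Q k", folded S_def] unfolding c_def
      by (cases "S (Q k)") simp_all
  qed
  have Q_gt: "w - eps k < inner z (Q k) - c k - I (Q k)" for k
    using Q[of k] unfolding S_Q by simp
  have "norm (Q k) \<le> L" for k
    using fconj_lipschitz_bounded[OF lip, of "Q k" "c k"] S_Q[of k] by (simp add: S_def)
  hence "\<forall>k. Q k \<in> cball 0 L" by simp
  then obtain l r where r: "strict_mono r" and "(Q \<circ> r) \<longlonglongrightarrow> l"
    by (rule seq_compactE[OF compact_imp_seq_compact[OF compact_cball]])
  hence Q_lim: "(\<lambda>k. Q (r k)) \<longlonglongrightarrow> l" by (simp add: o_def)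
  have "isCont I l" using I by (simp add: continuous_on_eq_continuous_at)
  hence I_lim: "(\<lambda>k. I (Q (r k))) \<longlonglongrightarrow> I l" using Q_lim by (rule isCont_tendsto_compose)
  have eps_lim: "(\<lambda>k. eps (r k)) \<longlonglongrightarrow> 0"
    using LIMSEQ_subseq_LIMSEQ[OF LIMSEQ_inverse_real_of_nat r] by (simp add: eps_def o_def)
  have "inner x l - f x \<le> inner z l - I l - w" for x
  proof -
    have "w - eps (r k) \<le> inner z (Q (r k)) - (inner x (Q (r k)) - f x) - I (Q (r k))" for k
      using Q_gt[of "r k"] fconj_real_ge[of x "Q (r k)" f] S_Q[of "r k"] by (simp add: S_def)
    moreover have "(\<lambda>k. w - eps (r k)) \<longlonglongrightarrow> w - 0"
      by (intro tendsto_intros eps_lim)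
    moreover have "(\<lambda>k. inner z (Q (r k)) - (inner x (Q (r k)) - f x) - I (Q (r k)))
        \<longlonglongrightarrow> inner z l - (inner x l - f x) - I l"
      by (intro tendsto_intros Q_lim I_lim)
    ultimately have "w - 0 \<le> inner z l - (inner x l - f x) - I l"
      by (meson LIMSEQ_le)
    thus ?thesis by simp
  qed
  hence upper: "S l \<le> ereal (inner z l - I l - w)"
    by (simp add: S_def fconj_real_le_iff)
  then obtain s where s: "S l = ereal s"
    using fconj_real_neq_minf[of f l, folded S_def] by (cases "S l") simp_all
  have "ereal (inner z l) - (S l + ereal (I l)) \<le> ereal w"
    using fconj_ge[of z l "\<lambda>q. S q + ereal (I q)"] w by (simp add: S_def)
  hence "S l \<ge> ereal (inner z l - I l - w)" using s by simp
  with upper show ?thesis unfolding S_def by (intro exI antisym)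
qed

lemma fconj_attained_imp_subgradient:
  fixes G :: "'a::euclidean_space \<Rightarrow> ereal"
  assumes \<omega>: "\<And>x. ereal (\<omega> x) = fconj G x" and attained: "G p = ereal (inner x1 p - \<omega> x1)"
  shows "\<omega> x1 + inner p (x - x1) \<le> \<omega> x"
proof -
  have "ereal (inner x p) - G p \<le> ereal (\<omega> x)" using fconj_ge[of x p G] \<omega>[of x] by simp
  thus ?thesis using attained by (simp add: inner_diff_right inner_commute)
qed

text \<open>The conclusion says \<open>z - J \<in> \<partial>f\<^sup>*(p)\<close>. Maximality of \<open>p\<close> and convexity of \<open>f\<^sup>*\<close>
  along the segment from \<open>p\<close> to \<open>r\<close> bound the increment of \<open>s \<mapsto> \<langle>z, p + s(r - p)\<rangle> - I(p + s(r - p))\<close>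
  by \<open>s (b - a)\<close>; comparing slopes at \<open>s = 0\<close> gives the claim.\<close>

lemma fconj_plus_first_order_condition:
  fixes f I :: "'a::euclidean_space \<Rightarrow> real"
  assumes max: "\<And>q. ereal (inner z q) - (fconj (\<lambda>x. ereal (f x)) q + ereal (I q))
                     \<le> ereal (inner z p - a - I p)"
    and S_p: "fconj (\<lambda>x. ereal (f x)) p = ereal a"
    and S_r: "fconj (\<lambda>x. ereal (f x)) r \<le> ereal b"
    and I_deriv: "((\<lambda>s. I (p + s *\<^sub>R (r - p))) has_real_derivative inner J (r - p)) (at 0)"
  shows "inner (z - J) (r - p) \<le> b - a"
proof -
  define S where "S = fconj (\<lambda>x. ereal (f x))"
  define v where "v = r - p"
  have le: "s * inner z v - (I (p + s *\<^sub>R v) - I p) \<le> s * (b - a)" if "0 < s" "s \<le> 1" for s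
  proof -
    have "p + s *\<^sub>R v = (1 - s) *\<^sub>R p + s *\<^sub>R r" by (simp add: v_def algebra_simps)
    hence "S (p + s *\<^sub>R v) \<le> ereal ((1 - s) * a + s * b)"
      using fconj_real_convex[of f p a r b s] S_p S_r that by (simp add: S_def)
    then obtain d where d: "S (p + s *\<^sub>R v) = ereal d" "d \<le> (1 - s) * a + s * b"
      using fconj_real_neq_minf[of f "p + s *\<^sub>R v", folded S_def]
      by (cases "S (p + s *\<^sub>R v)") simp_all
    have "inner z (p + s *\<^sub>R v) - d - I (p + s *\<^sub>R v) \<le> inner z p - a - I p"
      using max[of "p + s *\<^sub>R v"] d(1) by (simp add: S_def)
    with d(2) show ?thesis by (simp add: inner_add_right algebra_simps)
  qed
  have slope: "((\<lambda>s. s * inner z v - (I (p + s *\<^sub>R v) - I p)) has_real_derivative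
      inner z v - inner J v) (at 0)"
    using DERIV_diff[OF DERIV_cmult_Id[of "inner z v"] DERIV_diff[OF I_deriv DERIV_const[of "I p"]]]
    by (simp add: v_def mult.commute)
  have "inner z v - inner J v \<le> b - a"
    by (rule DERIV_le_of_le_linear_at_right[OF slope]) (simp, rule le)
  thus ?thesis by (simp add: v_def inner_diff_left)
qed

lemma has_derivative_partial_of_joint:
  fixes H :: "real \<Rightarrow> 'a::real_inner \<Rightarrow> real"
  assumes joint: "((\<lambda>(s, q). H s q) has_derivative (\<lambda>(ds, dq). A * ds + inner B dq))
                    (at (t, p) within S \<times> UNIV)"
    and t: "t \<in> S"
  shows "(H t has_derivative inner B) (at p)"
proof -
  have slice: "((\<lambda>q. (t, q)) has_derivative (\<lambda>h. (0, h))) (at p)"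
    by (auto intro!: derivative_eq_intros)
  have "range (\<lambda>q. (t, q)) \<subseteq> S \<times> UNIV" using t by auto
  with joint have "((\<lambda>(s, q). H s q) has_derivative (\<lambda>(ds, dq). A * ds + inner B dq))
                     (at (t, p) within range (\<lambda>q. (t, q)))"
    by (rule has_derivative_subset)
  from has_derivative_in_compose[OF slice this] show ?thesis by simp
qed

lemma continuous_on_slice:
  assumes "continuous_on (A \<times> B) (\<lambda>(t, p). F t p)" "q \<in> B"
  shows "continuous_on A (\<lambda>t. F t q)"
  by (rule continuous_on_compose2[OF assms(1), of _ "\<lambda>t. (t, q)", simplified])
     (use assms(2) in \<open>auto intro!: continuous_intros\<close>)

lemma continuous_on_integral_param:
  fixes H :: "real \<Rightarrow> 'a::topological_space \<Rightarrow> 'b::banach"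
  assumes "continuous_on ({a..b} \<times> UNIV) (\<lambda>(t, p). H t p)"
  shows "continuous_on UNIV (\<lambda>q. integral {a..b} (\<lambda>\<tau>. H \<tau> q))"
proof -
  have "continuous_on (UNIV \<times> cbox a b) (\<lambda>x. (\<lambda>(t, p). H t p) (prod.swap x))"
    by (rule continuous_on_compose2[OF assms]) (auto intro!: continuous_intros)
  hence "continuous_on (UNIV \<times> cbox a b) (\<lambda>(q, \<tau>). H \<tau> q)"
    by (simp add: case_prod_unfold)
  from integral_continuous_on_param[OF this] show ?thesis by simp
qed

lemma has_real_derivative_integral_along_line:
  fixes H :: "real \<Rightarrow> 'a::euclidean_space \<Rightarrow> real" and Hp :: "real \<Rightarrow> 'a \<Rightarrow> 'a"
  assumes H_cont: "continuous_on ({a..b} \<times> UNIV) (\<lambda>(t, p). H t p)"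
    and Hp_cont: "continuous_on ({a..b} \<times> UNIV) (\<lambda>(t, p). Hp t p)"
    and H_partial: "\<And>t q. t \<in> {a..b} \<Longrightarrow> (H t has_derivative inner (Hp t q)) (at q)"
  shows "((\<lambda>s. integral {a..b} (\<lambda>\<tau>. H \<tau> (p + s *\<^sub>R v))) has_real_derivative
           inner (integral {a..b} (\<lambda>\<tau>. Hp \<tau> p)) v) (at 0)"
proof -
  have deriv: "((\<lambda>s. H \<tau> (p + s *\<^sub>R v)) has_real_derivative inner (Hp \<tau> (p + s *\<^sub>R v)) v) (at s)"
    if "\<tau> \<in> cbox a b" for s \<tau>
    by (rule has_real_derivative_along_line) (use that H_partial in simp)
  have int: "(\<lambda>\<tau>. H \<tau> (p + s *\<^sub>R v)) integrable_on cbox a b" for s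
    using integrable_continuous_interval[OF continuous_on_slice[OF H_cont]] by simp
  have "continuous_on (UNIV \<times> cbox a b) (\<lambda>x. (\<lambda>(t, p). Hp t p) (snd x, p + fst x *\<^sub>R v))"
    by (rule continuous_on_compose2[OF Hp_cont]) (auto intro!: continuous_intros)
  hence cont: "continuous_on (UNIV \<times> cbox a b) (\<lambda>(s, \<tau>). inner (Hp \<tau> (p + s *\<^sub>R v)) v)"
    by (auto simp: case_prod_unfold intro!: continuous_intros)
  have "((\<lambda>s. integral (cbox a b) (\<lambda>\<tau>. H \<tau> (p + s *\<^sub>R v))) has_real_derivative
          integral (cbox a b) (\<lambda>\<tau>. inner (Hp \<tau> (p + 0 *\<^sub>R v)) v)) (at 0 within UNIV)"
    by (rule leibniz_rule_field_derivative[OF deriv int cont]) auto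
  moreover have "(\<lambda>\<tau>. Hp \<tau> p) integrable_on {a..b}"
    by (rule integrable_continuous_interval[OF continuous_on_slice[OF Hp_cont]]) simp
  ultimately show ?thesis by (simp add: integral_inner_left)
qed

lemma ointegral_combine:
  fixes f :: "real \<Rightarrow> 'b::euclidean_space"
  assumes f: "f integrable_on {a..b}" and t0: "t0 \<in> {a..b}" and t: "t \<in> {a..b}"
  shows "integral {a..t0} f + ointegral t0 t f = integral {a..t} f"
proof (cases "t0 \<le> t")
  case True
  have "f integrable_on {a..t}" by (rule integrable_subinterval_real[OF f]) (use t in auto)
  with True t0 show ?thesis
    using Henstock_Kurzweil_Integration.integral_combine[of a t0 t f] by (simp add: ointegral_def)
next
  case False
  have "f integrable_on {a..t0}" by (rule integrable_subinterval_real[OF f]) (use t0 in auto)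
  with False t have "integral {a..t} f + integral {t..t0} f = integral {a..t0} f"
    by (intro Henstock_Kurzweil_Integration.integral_combine) auto
  with False show ?thesis by (simp add: ointegral_def algebra_simps)
qed

locale hopf_formula =
  fixes T t1 :: real
    and H :: "real \<Rightarrow> 'a::euclidean_space \<Rightarrow> real" and Hp :: "real \<Rightarrow> 'a \<Rightarrow> 'a"
    and \<sigma> \<omega> :: "'a \<Rightarrow> real" and D\<sigma> D\<omega> :: "'a \<Rightarrow> 'a" and L :: real
  assumes t1: "0 \<le> t1" "t1 \<le> T"
    and H_cont: "continuous_on ({0..T} \<times> UNIV) (\<lambda>(t, p). H t p)"
    and Hp_cont: "continuous_on ({0..T} \<times> UNIV) (\<lambda>(t, p). Hp t p)"
    and H_partial: "\<And>t p. t \<in> {0..T} \<Longrightarrow> (H t has_derivative inner (Hp t p)) (at p)"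
    and \<sigma>_deriv: "\<And>x. (\<sigma> has_derivative inner (D\<sigma> x)) (at x)"
    and \<sigma>_convex: "convex_on UNIV \<sigma>"
    and \<sigma>_lipschitz: "L-lipschitz_on UNIV \<sigma>"
    and \<omega>_hopf: "\<And>x. ereal (\<omega> x) =
          fconj (\<lambda>q. fconj (\<lambda>z. ereal (\<sigma> z)) q + ereal (integral {0..t1} (\<lambda>\<tau>. H \<tau> q))) x"
    and \<omega>_deriv: "\<And>x. (\<omega> has_derivative inner (D\<omega> x)) (at x)"
begin

lemma Hp_integrable: "(\<lambda>\<tau>. Hp \<tau> q) integrable_on {0..T}"
  by (rule integrable_continuous_interval[OF continuous_on_slice[OF Hp_cont]]) simp

lemma continuous_on_H_integral: "continuous_on UNIV (\<lambda>q. integral {0..t1} (\<lambda>\<tau>. H \<tau> q))"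
  by (rule continuous_on_integral_param, rule continuous_on_subset[OF H_cont]) (use t1 in auto)

lemma H_integral_has_real_derivative_along_line:
  "((\<lambda>s. integral {0..t1} (\<lambda>\<tau>. H \<tau> (p + s *\<^sub>R v))) has_real_derivative
      inner (integral {0..t1} (\<lambda>\<tau>. Hp \<tau> p)) v) (at 0)"
proof (rule has_real_derivative_integral_along_line)
  show "continuous_on ({0..t1} \<times> UNIV) (\<lambda>(t, p). H t p)"
    by (rule continuous_on_subset[OF H_cont]) (use t1 in auto)
  show "continuous_on ({0..t1} \<times> UNIV) (\<lambda>(t, p). Hp t p)"
    by (rule continuous_on_subset[OF Hp_cont]) (use t1 in auto)
qed (use H_partial t1 in auto)

lemma D\<omega>_at_type_I_point:
  assumes "D\<sigma> y \<in> ell \<sigma> H t1 (y + integral {0..t1} (\<lambda>\<tau>. Hp \<tau> (D\<sigma> y)))"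
  shows "D\<omega> (y + integral {0..t1} (\<lambda>\<tau>. Hp \<tau> (D\<sigma> y))) = D\<sigma> y"
proof -
  define S where "S = fconj (\<lambda>z. ereal (\<sigma> z))"
  define I where "I q = integral {0..t1} (\<lambda>\<tau>. H \<tau> q)" for q
  define p where "p = D\<sigma> y"
  define x1 where "x1 = y + integral {0..t1} (\<lambda>\<tau>. Hp \<tau> p)"
  have S_p: "S p = ereal (inner y p - \<sigma> y)"
    unfolding S_def p_def by (rule fconj_gradient_eq[OF \<sigma>_convex \<sigma>_deriv])
  have "ereal (inner x1 q) - (S q + ereal (I q)) \<le> ereal (inner x1 p - (inner y p - \<sigma> y) - I p)" for q
  proof -
    have "ereal (inner x1 q) - (S q + ereal (I q)) = ereal (inner x1 q) - S q - ereal (I q)"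
      by (cases "S q") simp_all
    also have "\<dots> \<le> ereal (inner x1 p) - S p - ereal (I p)"
      using assms unfolding ell_def S_def I_def p_def x1_def by blast
    finally show ?thesis using S_p by simp
  qed
  hence "ereal (\<omega> x1) \<le> ereal (inner x1 p - (inner y p - \<sigma> y) - I p)"
    unfolding \<omega>_hopf fconj_le_iff S_def I_def by blast
  moreover have "ereal (inner x1 p) - (S p + ereal (I p)) \<le> ereal (\<omega> x1)"
    unfolding \<omega>_hopf S_def I_def by (rule fconj_ge)
  ultimately have "S p + ereal (I p) = ereal (inner x1 p - \<omega> x1)"
    using S_p by simp
  hence "\<omega> x1 + inner p (x - x1) \<le> \<omega> x" for x
    by (intro fconj_attained_imp_subgradient[OF \<omega>_hopf]) (simp add: S_def I_def)
  hence "p = D\<omega> x1" by (rule subgradient_eq_gradient[OF \<omega>_deriv])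
  thus ?thesis unfolding p_def x1_def ..
qed

lemma D\<sigma>_at_backward_foot:
  "D\<sigma> (z - integral {0..t1} (\<lambda>\<tau>. Hp \<tau> (D\<omega> z))) = D\<omega> z"
proof -
  define S where "S = fconj (\<lambda>z. ereal (\<sigma> z))"
  define I where "I q = integral {0..t1} (\<lambda>\<tau>. H \<tau> q)" for q
  obtain p where S_p: "S p = ereal (inner z p - I p - \<omega> z)"
    using fconj_plus_attained[OF \<sigma>_lipschitz continuous_on_H_integral \<omega>_hopf[symmetric]]
    unfolding S_def I_def by blast
  have "\<omega> z + inner p (x - z) \<le> \<omega> x" for x
    by (intro fconj_attained_imp_subgradient[OF \<omega>_hopf]) (simp add: S_p[unfolded S_def I_def])
  hence p: "p = D\<omega> z" by (rule subgradient_eq_gradient[OF \<omega>_deriv])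
  define y where "y = z - integral {0..t1} (\<lambda>\<tau>. Hp \<tau> p)"
  have "ereal (inner z q) - (S q + ereal (I q)) \<le> ereal (\<omega> z)" for q
    unfolding \<omega>_hopf S_def I_def by (rule fconj_ge)
  hence max: "ereal (inner z q) - (S q + ereal (I q))
                \<le> ereal (inner z p - (inner z p - I p - \<omega> z) - I p)" for q
    by simp
  have S_r: "S (D\<sigma> y) \<le> ereal (inner y (D\<sigma> y) - \<sigma> y)"
    unfolding S_def fconj_gradient_eq[OF \<sigma>_convex \<sigma>_deriv] ..
  have "inner y (D\<sigma> y - p) \<le> (inner y (D\<sigma> y) - \<sigma> y) - (inner z p - I p - \<omega> z)"
    using fconj_plus_first_order_condition[OF max[unfolded S_def I_def] S_p[unfolded S_def I_def]
        S_r[unfolded S_def] H_integral_has_real_derivative_along_line]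
    unfolding y_def I_def .
  hence "inner z p - I p - \<omega> z \<le> inner y p - \<sigma> y" by (simp add: inner_diff_right)
  moreover have "inner w p - \<sigma> w \<le> inner z p - I p - \<omega> z" for w
    using S_p[unfolded S_def] fconj_real_le_iff[of \<sigma> p "inner z p - I p - \<omega> z"] by simp
  ultimately have le: "inner w p - \<sigma> w \<le> inner y p - \<sigma> y" for w
    by (meson order_trans)
  have "\<sigma> y + inner p (w - y) \<le> \<sigma> w" for w
    using le[of w] by (simp add: inner_diff_right inner_commute)
  hence "p = D\<sigma> y" by (rule subgradient_eq_gradient[OF \<sigma>_deriv])
  thus ?thesis unfolding y_def p by simp
qed

lemma characteristic_extends_backward:
  "let y = z - integral {0..t1} (\<lambda>\<tau>. Hp \<tau> (D\<omega> z)) in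
     \<forall>t\<in>{0..T}. z + ointegral t1 t (\<lambda>\<tau>. Hp \<tau> (D\<omega> z))
                = y + integral {0..t} (\<lambda>\<tau>. Hp \<tau> (D\<sigma> y))"
  unfolding Let_def D\<sigma>_at_backward_foot
proof
  fix t :: real assume "t \<in> {0..T}"
  with t1 have "integral {0..t1} (\<lambda>\<tau>. Hp \<tau> (D\<omega> z)) + ointegral t1 t (\<lambda>\<tau>. Hp \<tau> (D\<omega> z))
      = integral {0..t} (\<lambda>\<tau>. Hp \<tau> (D\<omega> z))"
    by (intro ointegral_combine[OF Hp_integrable]) auto
  thus "z + ointegral t1 t (\<lambda>\<tau>. Hp \<tau> (D\<omega> z))
      = z - integral {0..t1} (\<lambda>\<tau>. Hp \<tau> (D\<omega> z)) + integral {0..t} (\<lambda>\<tau>. Hp \<tau> (D\<omega> z))"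
    by (simp add: algebra_simps flip: \<open>_ = integral {0..t} _\<close>)
qed

lemma type_I_characteristic_continues_forward:
  "let x1 = y + integral {0..t1} (\<lambda>\<tau>. Hp \<tau> (D\<sigma> y)) in
     D\<sigma> y \<in> ell \<sigma> H t1 x1 \<longrightarrow>
     (\<forall>t\<in>{t1..T}. y + integral {0..t} (\<lambda>\<tau>. Hp \<tau> (D\<sigma> y))
                   = x1 + integral {t1..t} (\<lambda>\<tau>. Hp \<tau> (D\<omega> x1)))"
  unfolding Let_def
proof (intro impI ballI)
  fix t :: real assume type_I: "D\<sigma> y \<in> ell \<sigma> H t1 (y + integral {0..t1} (\<lambda>\<tau>. Hp \<tau> (D\<sigma> y)))"
    and t: "t \<in> {t1..T}"
  with t1 have "integral {0..t1} (\<lambda>\<tau>. Hp \<tau> (D\<sigma> y)) + ointegral t1 t (\<lambda>\<tau>. Hp \<tau> (D\<sigma> y))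
      = integral {0..t} (\<lambda>\<tau>. Hp \<tau> (D\<sigma> y))"
    by (intro ointegral_combine[OF Hp_integrable]) auto
  with t show "y + integral {0..t} (\<lambda>\<tau>. Hp \<tau> (D\<sigma> y))
      = y + integral {0..t1} (\<lambda>\<tau>. Hp \<tau> (D\<sigma> y))
        + integral {t1..t} (\<lambda>\<tau>. Hp \<tau> (D\<omega> (y + integral {0..t1} (\<lambda>\<tau>. Hp \<tau> (D\<sigma> y)))))"
    unfolding D\<omega>_at_type_I_point[OF type_I] by (simp add: ointegral_def algebra_simps)
qed

end

theorem theorem4p3:
  fixes T t1 :: real
    and H Ht :: "real \<Rightarrow> 'a::euclidean_space \<Rightarrow> real"
    and Hp :: "real \<Rightarrow> 'a \<Rightarrow> 'a"
    and \<sigma> \<omega> :: "'a \<Rightarrow> real"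
    and D\<sigma> D\<omega> :: "'a \<Rightarrow> 'a"
  assumes T_pos: "T > 0"
    and H_C1: "\<forall>t\<in>{0..T}. \<forall>p. ((\<lambda>(s, q). H s q) has_derivative
                 (\<lambda>(ds, dq). Ht t p * ds + inner (Hp t p) dq)) (at (t, p) within {0..T} \<times> UNIV)"
    and Ht_cont: "continuous_on ({0..T} \<times> UNIV) (\<lambda>(t, p). Ht t p)"
    and Hp_cont: "continuous_on ({0..T} \<times> UNIV) (\<lambda>(t, p). Hp t p)"
    and \<sigma>_deriv: "\<forall>x. (\<sigma> has_derivative (\<lambda>h. inner (D\<sigma> x) h)) (at x)"
    and \<sigma>_C1: "continuous_on UNIV D\<sigma>"
    and \<sigma>_convex: "convex_on UNIV \<sigma>"
    and \<sigma>_lip: "\<exists>L. \<forall>x y. \<bar>\<sigma> x - \<sigma> y\<bar> \<le> L * dist x y"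
    and t1: "0 < t1" "t1 < T"
    and \<omega>_def: "\<forall>x. ereal (\<omega> x) =
        fconj (\<lambda>q. fconj (\<lambda>z. ereal (\<sigma> z)) q + ereal (integral {0..t1} (\<lambda>\<tau>. H \<tau> q))) x"
    and \<omega>_deriv: "\<forall>x. (\<omega> has_derivative (\<lambda>h. inner (D\<omega> x) h)) (at x)"
    and \<omega>_C1: "continuous_on UNIV D\<omega>"
  shows
    "(\<forall>z. let y = z - integral {0..t1} (\<lambda>\<tau>. Hp \<tau> (D\<omega> z)) in
        \<forall>t\<in>{0..T}. z + ointegral t1 t (\<lambda>\<tau>. Hp \<tau> (D\<omega> z))
                   = y + integral {0..t} (\<lambda>\<tau>. Hp \<tau> (D\<sigma> y)))
     \<and>
     (\<forall>y. let x1 = y + integral {0..t1} (\<lambda>\<tau>. Hp \<tau> (D\<sigma> y)) in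
        D\<sigma> y \<in> ell \<sigma> H t1 x1 \<longrightarrow>
        (\<forall>t\<in>{t1..T}. y + integral {0..t} (\<lambda>\<tau>. Hp \<tau> (D\<sigma> y))
                      = x1 + integral {t1..t} (\<lambda>\<tau>. Hp \<tau> (D\<omega> x1))))"
proof -
  obtain L where L: "\<forall>x y. \<bar>\<sigma> x - \<sigma> y\<bar> \<le> L * dist x y" using \<sigma>_lip by blast
  have "\<bar>L\<bar>-lipschitz_on UNIV \<sigma>"
  proof (rule lipschitz_onI)
    fix x y
    have "\<bar>\<sigma> x - \<sigma> y\<bar> \<le> L * dist x y" using L by blast
    also have "\<dots> \<le> \<bar>L\<bar> * dist x y" by (simp add: mult_right_mono)
    finally show "dist (\<sigma> x) (\<sigma> y) \<le> \<bar>L\<bar> * dist x y" by (simp add: dist_real_def)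
  qed simp
  moreover have "continuous_on ({0..T} \<times> UNIV) (\<lambda>(t, p). H t p)"
    by (rule has_derivative_continuous_on[where
          f' = "\<lambda>(t, p) (ds, dq). Ht t p * ds + inner (Hp t p) dq"]) (use H_C1 in auto)
  moreover have "(H t has_derivative inner (Hp t p)) (at p)" if "t \<in> {0..T}" for t p
    using has_derivative_partial_of_joint H_C1 that by blast
  ultimately interpret hopf_formula T t1 H Hp \<sigma> \<omega> D\<sigma> D\<omega> "\<bar>L\<bar>"
    using t1 Hp_cont \<sigma>_deriv \<sigma>_convex \<omega>_def \<omega>_deriv by unfold_locales auto
  show ?thesis
    using characteristic_extends_backward type_I_characteristic_continues_forward by blast
qed

end
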